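(* Let $G_{\mathrm{vc}}=(V_{\mathrm{vc}},E_{\mathrm{vc}})$ be a vertex-capacitated graph with node-weighting $A_{\mathrm{vc}}$, and let $G_{\mathrm{ec}}=(V_{\mathrm{ec}},E_{\mathrm{ec}})$ be the corresponding directed edge-capacitated graph with node-weighting $A_{\mathrm{ec}}$. Then for all $h,s,\phi$: (1) If $A_{\mathrm{vc}}$ is $(h,s)$-length $\phi$-expanding in $G_{\mathrm{vc}}$, then $A_{\mathrm{ec}}$ is $(h,s)$-length $\phi$-expanding in $G_{\mathrm{ec}}$. (2) If $A_{\mathrm{ec}}$ is $(h,s)$-length $\phi$-expanding in $G_{\mathrm{ec}}$, then $A_{\mathrm{vc}}$ is $(h,s)$-length $\frac{\phi}{3}$-expanding in $G_{\mathrm{vc}}$.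
   Context: Vertex-capacitated graph: finite undirected graph with positive integer lengths $\ell$ and capacities $u$ on vertices and edges; path length sums vertex and edge lengths. Corresponding directed graph: for each $v\in V_{\mathrm{vc}}$, add vertices $v_{\mathrm{in}},v_{\mathrm{mid}},v_{\mathrm{out}}$ and directed edges $(v_{\mathrm{in}},v_{\mathrm{mid}}),(v_{\mathrm{mid}},v_{\mathrm{out}}),(v_{\mathrm{in}},v_{\mathrm{out}})$, each with length $\ell(v)$ and capacity $u(v)$; for each edge $e=\{u,v\}\in E_{\mathrm{vc}}$ add directed edges $(u_{\mathrm{out}},v_{\mathrm{in}})$ and $(v_{\mathrm{out}},u_{\mathrm{in}})$ with length $\ell(e)$ and capacity $u(e)$; set $A_{\mathrm{ec}}(v_{\mathrm{mid}})=A_{\mathrm{vc}}(v)$ and $A_{\mathrm{ec}}=0$ on all other vertices. General notions: node-weighting $A\ge0$; demand $D:V\times V\to\mathbb{R}_{\ge0}$; $A$-respecting: $\max\{\sum_wD(v,w),\sum_wD(w,v)\}\le A(v)$; $h$-length: $D(v,w)>0\Rightarrow\mathrm{dist}(v,w)\le h$; symmetric: $D(v,w)=D(w,v)$. An $H$-length moving cut assigns to each edge (and, in a vertex-capacitated graph, also each vertex) $x$ a value $C(x)\in\{0,\tfrac1H,\dots\}\cap[0,1]$; $|C|=\sum_xu(x)C(x)$; $G-C$ has lengths $\ell(x)+H\cdot C(x)$; $\mathrm{sep}_{h'}(C,D)=\sum_{(u,v):\mathrm{dist}_{G-C}(u,v)>h'}D(u,v)$; $\mathrm{spars}_{h'}(C,D)=|C|/\mathrm{sep}_{h'}(C,D)$.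 For an $hs$-length moving cut $C$, $\mathrm{spars}_{(h,s)}(C,A)=\min\mathrm{spars}_{hs}(C,D)$ over $A$-respecting $h$-length demands $D$ — required to be symmetric in the directed graph $G_{\mathrm{ec}}$, arbitrary in $G_{\mathrm{vc}}$ (zero separation counts as $+\infty$). $A$ is $(h,s)$-length $\phi$-expanding if $\mathrm{spars}_{(h,s)}(C,A)\ge\phi$ for every $hs$-length moving cut $C$. *)

theory Defs
  imports "HOL-Analysis.Analysis" "HOL-Library.Extended_Real"
begin

definition cut_val :: "real \<Rightarrow> real \<Rightarrow> bool" where
  "cut_val H x \<longleftrightarrow> (\<exists>k::nat. x = real k / H) \<and> 0 \<le> x \<and> x \<le> 1"

definition demand_on :: "'v set \<Rightarrow> ('v \<Rightarrow> 'v \<Rightarrow> real) \<Rightarrow> bool" where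
  "demand_on V D \<longleftrightarrow> (\<forall>u v. 0 \<le> D u v) \<and> (\<forall>u v. D u v \<noteq> 0 \<longrightarrow> u \<in> V \<and> v \<in> V)"

definition A_respecting :: "'v set \<Rightarrow> ('v \<Rightarrow> real) \<Rightarrow> ('v \<Rightarrow> 'v \<Rightarrow> real) \<Rightarrow> bool" where
  "A_respecting V A D \<longleftrightarrow> (\<forall>v\<in>V. max (\<Sum>w\<in>V. D v w) (\<Sum>w\<in>V. D w v) \<le> A v)"

definition symmetric_demand :: "('v \<Rightarrow> 'v \<Rightarrow> real) \<Rightarrow> bool" where
  "symmetric_demand D \<longleftrightarrow> (\<forall>u v. D u v = D v u)"

definition spars_of :: "real \<Rightarrow> real \<Rightarrow> ereal" where
  "spars_of sz sep = (if sep = 0 then \<infinity> else ereal (sz / sep))"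

definition dwalk :: "'v set \<Rightarrow> ('v \<times> 'v) set \<Rightarrow> 'v list \<Rightarrow> bool" where
  "dwalk V E p \<longleftrightarrow> p \<noteq> [] \<and> set p \<subseteq> V \<and> (\<forall>e\<in>set (zip p (tl p)). e \<in> E)"

definition dwalk_len :: "('v \<times> 'v \<Rightarrow> real) \<Rightarrow> 'v list \<Rightarrow> real" where
  "dwalk_len l p = sum_list (map l (zip p (tl p)))"

definition ddist :: "'v set \<Rightarrow> ('v \<times> 'v) set \<Rightarrow> ('v \<times> 'v \<Rightarrow> real) \<Rightarrow> 'v \<Rightarrow> 'v \<Rightarrow> ereal" where
  "ddist V E l u v = (INF p\<in>{p. dwalk V E p \<and> hd p = u \<and> last p = v}. ereal (dwalk_len l p))"

definition d_movcut :: "('v \<times> 'v) set \<Rightarrow> real \<Rightarrow> ('v \<times> 'v \<Rightarrow> real) \<Rightarrow> bool" where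
  "d_movcut E H C \<longleftrightarrow> (\<forall>e\<in>E. cut_val H (C e))"

definition d_cutsize :: "('v \<times> 'v) set \<Rightarrow> ('v \<times> 'v \<Rightarrow> real) \<Rightarrow> ('v \<times> 'v \<Rightarrow> real) \<Rightarrow> real" where
  "d_cutsize E cap C = (\<Sum>e\<in>E. cap e * C e)"

definition d_sep :: "'v set \<Rightarrow> ('v \<times> 'v) set \<Rightarrow> ('v \<times> 'v \<Rightarrow> real) \<Rightarrow> real \<Rightarrow>
    ('v \<times> 'v \<Rightarrow> real) \<Rightarrow> real \<Rightarrow> ('v \<Rightarrow> 'v \<Rightarrow> real) \<Rightarrow> real" where
  "d_sep V E l H C hp D =
     (\<Sum>(u,v)\<in>{(u,v)\<in>V \<times> V. ddist V E (\<lambda>e. l e + H * C e) u v > ereal hp}. D u v)"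

definition d_hlength :: "'v set \<Rightarrow> ('v \<times> 'v) set \<Rightarrow> ('v \<times> 'v \<Rightarrow> real) \<Rightarrow> real \<Rightarrow> ('v \<Rightarrow> 'v \<Rightarrow> real) \<Rightarrow> bool" where
  "d_hlength V E l h D \<longleftrightarrow> (\<forall>u v. D u v > 0 \<longrightarrow> ddist V E l u v \<le> ereal h)"

definition d_spars_hs :: "'v set \<Rightarrow> ('v \<times> 'v) set \<Rightarrow> ('v \<times> 'v \<Rightarrow> real) \<Rightarrow> ('v \<times> 'v \<Rightarrow> real) \<Rightarrow>
    ('v \<Rightarrow> real) \<Rightarrow> real \<Rightarrow> real \<Rightarrow> ('v \<times> 'v \<Rightarrow> real) \<Rightarrow> ereal" where
  "d_spars_hs V E l cap A h s C =
     (INF D\<in>{D. demand_on V D \<and> A_respecting V A D \<and> d_hlength V E l h D \<and> symmetric_demand D}.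
        spars_of (d_cutsize E cap C) (d_sep V E l (h * s) C (h * s) D))"

definition d_expanding :: "'v set \<Rightarrow> ('v \<times> 'v) set \<Rightarrow> ('v \<times> 'v \<Rightarrow> real) \<Rightarrow> ('v \<times> 'v \<Rightarrow> real) \<Rightarrow>
    ('v \<Rightarrow> real) \<Rightarrow> real \<Rightarrow> real \<Rightarrow> real \<Rightarrow> bool" where
  "d_expanding V E l cap A h s \<phi> \<longleftrightarrow>
     (\<forall>C. d_movcut E (h * s) C \<longrightarrow> d_spars_hs V E l cap A h s C \<ge> ereal \<phi>)"

definition vc_graph :: "'v set \<Rightarrow> 'v set set \<Rightarrow> ('v \<Rightarrow> nat) \<Rightarrow> ('v set \<Rightarrow> nat) \<Rightarrow>
    ('v \<Rightarrow> nat) \<Rightarrow> ('v set \<Rightarrow> nat) \<Rightarrow> ('v \<Rightarrow> real) \<Rightarrow> bool" where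
  "vc_graph V E lv le uv ue A \<longleftrightarrow> finite V \<and>
     (\<forall>e\<in>E. \<exists>a b. e = {a, b} \<and> a \<noteq> b \<and> a \<in> V \<and> b \<in> V) \<and>
     (\<forall>v\<in>V. 0 < lv v \<and> 0 < uv v) \<and> (\<forall>e\<in>E. 0 < le e \<and> 0 < ue e) \<and> (\<forall>v\<in>V. 0 \<le> A v)"

definition vwalk :: "'v set \<Rightarrow> 'v set set \<Rightarrow> 'v list \<Rightarrow> bool" where
  "vwalk V E p \<longleftrightarrow> p \<noteq> [] \<and> set p \<subseteq> V \<and> (\<forall>(a,b)\<in>set (zip p (tl p)). {a, b} \<in> E)"

definition vwalk_len :: "('v \<Rightarrow> real) \<Rightarrow> ('v set \<Rightarrow> real) \<Rightarrow> 'v list \<Rightarrow> real" where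
  "vwalk_len lv le p = sum_list (map lv p) + sum_list (map (\<lambda>(a,b). le {a, b}) (zip p (tl p)))"

definition vdist :: "'v set \<Rightarrow> 'v set set \<Rightarrow> ('v \<Rightarrow> real) \<Rightarrow> ('v set \<Rightarrow> real) \<Rightarrow> 'v \<Rightarrow> 'v \<Rightarrow> ereal" where
  "vdist V E lv le u v = (if u = v then 0 else
     (INF p\<in>{p. vwalk V E p \<and> hd p = u \<and> last p = v}. ereal (vwalk_len lv le p)))"

definition v_movcut :: "'v set \<Rightarrow> 'v set set \<Rightarrow> real \<Rightarrow> ('v \<Rightarrow> real) \<Rightarrow> ('v set \<Rightarrow> real) \<Rightarrow> bool" where
  "v_movcut V E H Cv Ce \<longleftrightarrow> (\<forall>v\<in>V. cut_val H (Cv v)) \<and> (\<forall>e\<in>E. cut_val H (Ce e))"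

definition v_cutsize :: "'v set \<Rightarrow> 'v set set \<Rightarrow> ('v \<Rightarrow> nat) \<Rightarrow> ('v set \<Rightarrow> nat) \<Rightarrow>
    ('v \<Rightarrow> real) \<Rightarrow> ('v set \<Rightarrow> real) \<Rightarrow> real" where
  "v_cutsize V E uv ue Cv Ce = (\<Sum>v\<in>V. real (uv v) * Cv v) + (\<Sum>e\<in>E. real (ue e) * Ce e)"

definition v_sep :: "'v set \<Rightarrow> 'v set set \<Rightarrow> ('v \<Rightarrow> nat) \<Rightarrow> ('v set \<Rightarrow> nat) \<Rightarrow> real \<Rightarrow>
    ('v \<Rightarrow> real) \<Rightarrow> ('v set \<Rightarrow> real) \<Rightarrow> real \<Rightarrow> ('v \<Rightarrow> 'v \<Rightarrow> real) \<Rightarrow> real" where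
  "v_sep V E lv le H Cv Ce hp D =
     (\<Sum>(u,v)\<in>{(u,v)\<in>V \<times> V.
         vdist V E (\<lambda>x. real (lv x) + H * Cv x) (\<lambda>e. real (le e) + H * Ce e) u v > ereal hp}. D u v)"

definition v_hlength :: "'v set \<Rightarrow> 'v set set \<Rightarrow> ('v \<Rightarrow> nat) \<Rightarrow> ('v set \<Rightarrow> nat) \<Rightarrow> real \<Rightarrow>
    ('v \<Rightarrow> 'v \<Rightarrow> real) \<Rightarrow> bool" where
  "v_hlength V E lv le h D \<longleftrightarrow>
     (\<forall>u v. D u v > 0 \<longrightarrow> vdist V E (\<lambda>x. real (lv x)) (\<lambda>e. real (le e)) u v \<le> ereal h)"

definition v_spars_hs :: "'v set \<Rightarrow> 'v set set \<Rightarrow> ('v \<Rightarrow> nat) \<Rightarrow> ('v set \<Rightarrow> nat) \<Rightarrow>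
    ('v \<Rightarrow> nat) \<Rightarrow> ('v set \<Rightarrow> nat) \<Rightarrow> ('v \<Rightarrow> real) \<Rightarrow> real \<Rightarrow> real \<Rightarrow>
    ('v \<Rightarrow> real) \<Rightarrow> ('v set \<Rightarrow> real) \<Rightarrow> ereal" where
  "v_spars_hs V E lv le uv ue A h s Cv Ce =
     (INF D\<in>{D. demand_on V D \<and> A_respecting V A D \<and> v_hlength V E lv le h D}.
        spars_of (v_cutsize V E uv ue Cv Ce) (v_sep V E lv le (h * s) Cv Ce (h * s) D))"

definition v_expanding :: "'v set \<Rightarrow> 'v set set \<Rightarrow> ('v \<Rightarrow> nat) \<Rightarrow> ('v set \<Rightarrow> nat) \<Rightarrow>
    ('v \<Rightarrow> nat) \<Rightarrow> ('v set \<Rightarrow> nat) \<Rightarrow> ('v \<Rightarrow> real) \<Rightarrow> real \<Rightarrow> real \<Rightarrow> real \<Rightarrow> bool" where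
  "v_expanding V E lv le uv ue A h s \<phi> \<longleftrightarrow>
     (\<forall>Cv Ce. v_movcut V E (h * s) Cv Ce \<longrightarrow> v_spars_hs V E lv le uv ue A h s Cv Ce \<ge> ereal \<phi>)"

datatype 'v node = In 'v | Mid 'v | Out 'v

definition ec_V :: "'v set \<Rightarrow> 'v node set" where
  "ec_V V = In ` V \<union> Mid ` V \<union> Out ` V"

definition ec_E :: "'v set \<Rightarrow> 'v set set \<Rightarrow> ('v node \<times> 'v node) set" where
  "ec_E V E = (\<Union>v\<in>V. {(In v, Mid v), (Mid v, Out v), (In v, Out v)})
     \<union> {(Out a, In b) | a b. {a, b} \<in> E}"

fun ec_attr :: "('v \<Rightarrow> nat) \<Rightarrow> ('v set \<Rightarrow> nat) \<Rightarrow> 'v node \<times> 'v node \<Rightarrow> real" where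
  "ec_attr f g (In v, Mid _) = real (f v)"
| "ec_attr f g (Mid v, Out _) = real (f v)"
| "ec_attr f g (In v, Out _) = real (f v)"
| "ec_attr f g (Out a, In b) = real (g {a, b})"
| "ec_attr f g _ = 0"

fun ec_A :: "('v \<Rightarrow> real) \<Rightarrow> 'v node \<Rightarrow> real" where
  "ec_A A (Mid v) = A v"
| "ec_A A _ = 0"

end

theory Submission
  imports Defs
begin

(*
  In the directed graph G_ec the distance between Mid u and Mid v equals the distance between u and v in
  the vertex-capacitated graph: a walk u, b, ..., v corresponds to Mid u, Out u, In b, ..., In v, Mid v,
  and every vertex is paid through exactly one of its three gadget arcs. Demands correspond via
  v \<mapsto> Mid v: a directed demand respecting the weighting A_ec lives on the Mid
  copies, and an undirected demand may be symmetrised, because distances in the vertex-capacitated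
  graph are symmetric.

  A moving cut of G_ec gives a vertex cut by taking the maximum over the three gadget arcs
  of a vertex and over the two arcs of an edge; this does not increase the size and can only
  lengthen walks, so separation does not decrease. Conversely a vertex cut is copied onto the three
  gadget arcs and onto both arcs of every edge; this preserves all distances between Mid copies
  exactly and multiplies the size by at most 3, which is where the factor 1/3 comes from.
*)

section \<open>Walks and distances\<close>

lemma dwalk_Cons2: "dwalk V E (a # b # q) \<longleftrightarrow> a \<in> V \<and> (a, b) \<in> E \<and> dwalk V E (b # q)"
  by (auto simp: dwalk_def)

lemma dwalk_single [simp]: "dwalk V E [a] \<longleftrightarrow> a \<in> V"
  by (auto simp: dwalk_def)

lemma dwalk_len_Cons2: "dwalk_len L (a # b # q) = L (a, b) + dwalk_len L (b # q)"
  by (simp add: dwalk_len_def)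

lemma dwalk_len_single [simp]: "dwalk_len L [a] = 0"
  by (simp add: dwalk_len_def)

lemma vwalk_Cons2: "vwalk V E (a # b # q) \<longleftrightarrow> a \<in> V \<and> {a, b} \<in> E \<and> vwalk V E (b # q)"
  by (auto simp: vwalk_def)

lemma vwalk_single [simp]: "vwalk V E [a] \<longleftrightarrow> a \<in> V"
  by (auto simp: vwalk_def)

lemma vwalk_len_Cons2: "vwalk_len Lv Le (a # b # p) = Lv a + Le {a, b} + vwalk_len Lv Le (b # p)"
  by (simp add: vwalk_len_def)

lemma vwalk_len_single [simp]: "vwalk_len Lv Le [a] = Lv a"
  by (simp add: vwalk_len_def)

lemma dwalk_len_mono:
  assumes "dwalk V E q" "\<And>e. e \<in> E \<Longrightarrow> L e \<le> L' e"
  shows "dwalk_len L q \<le> dwalk_len L' q"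
  using assms unfolding dwalk_len_def dwalk_def by (intro sum_list_mono) auto

lemma dwalk_len_nonneg:
  assumes "dwalk V E q" "\<And>e. e \<in> E \<Longrightarrow> 0 \<le> L e"
  shows "0 \<le> dwalk_len L q"
  using dwalk_len_mono[OF assms(1), of "\<lambda>_. 0" L] assms(2) by (simp add: dwalk_len_def)

lemma ddist_mono:
  assumes "\<And>e. e \<in> E \<Longrightarrow> L e \<le> L' e"
  shows "ddist V E L u v \<le> ddist V E L' u v"
  unfolding ddist_def using assms by (intro INF_mono) (force intro: dwalk_len_mono)

lemma zip_tl_snoc2: "zip (xs @ [y, x]) (tl (xs @ [y, x])) = zip (xs @ [y]) (tl (xs @ [y])) @ [(y, x)]"
  by (induction xs rule: induct_list012) auto

lemma zip_tl_rev: "zip (rev p) (tl (rev p)) = rev (map prod.swap (zip p (tl p)))"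
proof (induction p rule: induct_list012)
  case (3 x y zs)
  then show ?case by (simp add: zip_tl_snoc2)
qed auto

lemma vwalk_rev: "vwalk V E p \<Longrightarrow> vwalk V E (rev p)"
  unfolding vwalk_def zip_tl_rev by (auto simp: insert_commute)

lemma vwalk_len_rev: "vwalk_len Lv Le (rev p) = vwalk_len Lv Le p"
  unfolding vwalk_len_def zip_tl_rev by (simp add: rev_map[symmetric] insert_commute split_def comp_def)

lemma vdist_commute: "vdist V E Lv Le u v = vdist V E Lv Le v u"
proof -
  have "vdist V E Lv Le u v \<le> vdist V E Lv Le v u" for u v
  proof (cases "u = v")
    case False
    have "vdist V E Lv Le u v \<le> ereal (vwalk_len Lv Le p)"
      if "vwalk V E p" "hd p = v" "last p = u" for p
      unfolding vdist_def using False that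
      by (auto intro: INF_lower2[of "rev p"] simp: vwalk_rev vwalk_len_rev hd_rev last_rev)
    then show ?thesis
      using False unfolding vdist_def[of V E Lv Le v u] by (auto intro: INF_greatest)
  qed simp
  then show ?thesis by (blast intro: antisym)
qed

section \<open>Moving cuts, demands and sparsity\<close>

lemma cut_val_nonneg: "cut_val H x \<Longrightarrow> 0 \<le> x"
  unfolding cut_val_def by auto

(* The case H = 0 relies on the convention k / 0 = 0. *)
lemma cut_val_eq_0_if_nonpos: "H \<le> 0 \<Longrightarrow> cut_val H x \<Longrightarrow> x = 0"
  unfolding cut_val_def by (cases "H = 0") (auto simp: divide_nonneg_neg intro: antisym)

lemma cut_val_mult_nonneg: "cut_val H x \<Longrightarrow> 0 \<le> H * x"
  using cut_val_eq_0_if_nonpos[of H x] cut_val_nonneg[of H x] by (cases "H \<le> 0") auto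

lemma cut_val_mult_mono: "cut_val H x \<Longrightarrow> cut_val H y \<Longrightarrow> x \<le> y \<Longrightarrow> H * x \<le> H * y"
  using cut_val_eq_0_if_nonpos[of H x] cut_val_eq_0_if_nonpos[of H y]
  by (cases "H \<le> 0") (auto intro: mult_left_mono)

lemma cut_val_max: "cut_val H x \<Longrightarrow> cut_val H y \<Longrightarrow> cut_val H (max x y)"
  by (simp add: max_def)

lemma v_movcut_nonneg:
  assumes "v_movcut V E H Cv Ce"
  shows "x \<in> V \<Longrightarrow> 0 \<le> Cv x" "e \<in> E \<Longrightarrow> 0 \<le> Ce e"
  using assms cut_val_nonneg unfolding v_movcut_def by blast+

lemma v_cutsize_nonneg: "v_movcut V E H Cv Ce \<Longrightarrow> 0 \<le> v_cutsize V E uv ue Cv Ce"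
  unfolding v_cutsize_def by (intro add_nonneg_nonneg sum_nonneg) (auto dest: v_movcut_nonneg)

lemma d_sep_nonneg: "demand_on V D \<Longrightarrow> 0 \<le> d_sep V E L H C hp D"
  unfolding d_sep_def by (intro sum_nonneg) (auto simp: demand_on_def)

lemma v_sep_nonneg: "demand_on V D \<Longrightarrow> 0 \<le> v_sep V E lv le H Cv Ce hp D"
  unfolding v_sep_def by (intro sum_nonneg) (auto simp: demand_on_def)

lemma spars_of_mono:
  assumes "0 \<le> a" "a \<le> a'" "0 \<le> b'" "b' \<le> b" "ereal \<phi> \<le> spars_of a b"
  shows "ereal \<phi> \<le> spars_of a' b'"
proof (cases "b' = 0")
  case False
  then have "b' > 0" "b > 0" using assms by auto
  then have "\<phi> \<le> a / b" using assms(5) by (simp add: spars_of_def)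
  also have "\<dots> \<le> a' / b'" using assms \<open>b' > 0\<close> by (intro frac_le) auto
  finally show ?thesis using False by (simp add: spars_of_def)
qed (simp add: spars_of_def)

lemma spars_of_scale:
  assumes "0 < c" "a' \<le> c * a" "0 \<le> b" "ereal \<phi> \<le> spars_of a' b"
  shows "ereal (\<phi> / c) \<le> spars_of a b"
proof (cases "b = 0")
  case False
  then have "\<phi> \<le> a' / b" using assms(4) by (simp add: spars_of_def)
  also have "\<dots> \<le> c * a / b" using assms False by (intro divide_right_mono) auto
  finally show ?thesis using assms(1) False by (simp add: spars_of_def field_simps)
qed (simp add: spars_of_def)

lemma demand_on_pos_mem: "demand_on V D \<Longrightarrow> 0 < D u v \<Longrightarrow> u \<in> V \<and> v \<in> V"
  unfolding demand_on_def by (metis less_irrefl)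

definition symmetrize :: "('v \<Rightarrow> 'v \<Rightarrow> real) \<Rightarrow> 'v \<Rightarrow> 'v \<Rightarrow> real" where
  "symmetrize D u v = (D u v + D v u) / 2"

lemma demand_on_symmetrize:
  assumes "demand_on V D"
  shows "demand_on V (symmetrize D)"
  unfolding demand_on_def
proof (rule conjI; intro allI impI)
  fix u v
  show "0 \<le> symmetrize D u v"
    using assms by (simp add: demand_on_def symmetrize_def)
next
  fix u v
  assume "symmetrize D u v \<noteq> 0"
  then have "D u v \<noteq> 0 \<or> D v u \<noteq> 0"
    by (auto simp: symmetrize_def)
  with assms show "u \<in> V \<and> v \<in> V"
    by (auto simp: demand_on_def)
qed

lemma A_respecting_symmetrize:
  assumes "A_respecting V A D"
  shows "A_respecting V A (symmetrize D)"
  unfolding A_respecting_def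
proof
  fix v assume "v \<in> V"
  have "(\<Sum>w\<in>V. symmetrize D v w) = ((\<Sum>w\<in>V. D v w) + (\<Sum>w\<in>V. D w v)) / 2"
    by (simp add: symmetrize_def sum_divide_distrib[symmetric] sum.distrib)
  moreover have "(\<Sum>w\<in>V. symmetrize D w v) = (\<Sum>w\<in>V. symmetrize D v w)"
    by (simp add: symmetrize_def add.commute)
  ultimately show "max (\<Sum>w\<in>V. symmetrize D v w) (\<Sum>w\<in>V. symmetrize D w v) \<le> A v"
    using assms \<open>v \<in> V\<close> unfolding A_respecting_def by fastforce
qed

lemma v_hlength_symmetrize:
  assumes "v_hlength V E lv le h D"
  shows "v_hlength V E lv le h (symmetrize D)"
  unfolding v_hlength_def
proof (intro allI impI)
  fix u v assume "0 < symmetrize D u v"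
  then have "0 < D u v \<or> 0 < D v u"
    by (auto simp: symmetrize_def)
  then show "vdist V E lv le u v \<le> ereal h"
    using assms vdist_commute unfolding v_hlength_def by metis
qed

lemma sum_swap_symmetric:
  assumes "\<And>u v. (u, v) \<in> Q \<longleftrightarrow> (v, u) \<in> Q"
  shows "(\<Sum>(u, v)\<in>Q. f v u) = (\<Sum>(u, v)\<in>Q. f u v)"
proof -
  have "prod.swap ` Q = Q"
    using assms by force
  then have "(\<Sum>(u, v)\<in>Q. f u v) = (\<Sum>(u, v)\<in>prod.swap ` Q. f u v)"
    by simp
  also have "\<dots> = (\<Sum>(u, v)\<in>Q. f v u)"
    by (subst sum.reindex) (auto simp: case_prod_beta)
  finally show ?thesis ..
qed

lemma sum_symmetrize:
  assumes "\<And>u v. (u, v) \<in> Q \<longleftrightarrow> (v, u) \<in> Q"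
  shows "(\<Sum>(u, v)\<in>Q. symmetrize D u v) = (\<Sum>(u, v)\<in>Q. D u v)"
  using sum_swap_symmetric[OF assms, of D]
  by (simp add: symmetrize_def case_prod_beta sum_divide_distrib[symmetric] sum.distrib)

lemma v_sep_symmetrize: "v_sep V E lv le H Cv Ce hp (symmetrize D) = v_sep V E lv le H Cv Ce hp D"
  unfolding v_sep_def by (rule sum_symmetrize) (auto simp: vdist_commute)

section \<open>The directed graph G_ec\<close>

fun ec_lift :: "('v \<Rightarrow> real) \<Rightarrow> ('v set \<Rightarrow> real) \<Rightarrow> 'v node \<times> 'v node \<Rightarrow> real" where
  "ec_lift f g (In v, Mid _) = f v"
| "ec_lift f g (Mid v, Out _) = f v"
| "ec_lift f g (In v, Out _) = f v"
| "ec_lift f g (Out a, In b) = g {a, b}"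
| "ec_lift f g _ = 0"

lemma ec_attr_eq_ec_lift: "ec_attr f g = ec_lift (\<lambda>v. real (f v)) (\<lambda>e. real (g e))"
proof (rule ext, clarify)
  fix a b :: "'a node"
  show "ec_attr f g (a, b) = ec_lift (\<lambda>v. real (f v)) (\<lambda>e. real (g e)) (a, b)"
    by (cases a; cases b) simp_all
qed

fun vertex_of :: "'v node \<Rightarrow> 'v" where
  "vertex_of (In v) = v" | "vertex_of (Mid v) = v" | "vertex_of (Out v) = v"

lemma ec_V_iff [simp]:
  "In x \<in> ec_V V \<longleftrightarrow> x \<in> V" "Mid x \<in> ec_V V \<longleftrightarrow> x \<in> V" "Out x \<in> ec_V V \<longleftrightarrow> x \<in> V"
  by (auto simp: ec_V_def)

lemma ec_E_iff: "(a, b) \<in> ec_E V E \<longleftrightarrow>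
    (\<exists>x\<in>V. (a, b) = (In x, Mid x) \<or> (a, b) = (Mid x, Out x) \<or> (a, b) = (In x, Out x)) \<or>
    (\<exists>x y. a = Out x \<and> b = In y \<and> {x, y} \<in> E)"
  by (auto simp: ec_E_def)

lemma dwalk_of_vwalk:
  "vwalk V E p \<Longrightarrow> \<exists>q. dwalk (ec_V V) (ec_E V E) q \<and> hd q = In (hd p) \<and> last q = Mid (last p)
      \<and> dwalk_len (ec_lift Lv Le) q = vwalk_len Lv Le p"
proof (induction p rule: induct_list012)
  case (2 x)
  then show ?case
    by (intro exI[of _ "[In x, Mid x]"]) (auto simp: dwalk_Cons2 dwalk_len_Cons2 ec_E_iff)
next
  case (3 x y p)
  then obtain q where q: "dwalk (ec_V V) (ec_E V E) q" "hd q = In y" "last q = Mid (last (y # p))"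
      "dwalk_len (ec_lift Lv Le) q = vwalk_len Lv Le (y # p)"
    by (auto simp: vwalk_Cons2)
  then obtain q' where "q = In y # q'"
    by (cases q) (auto simp: dwalk_def)
  with 3 q show ?case
    by (intro exI[of _ "In x # Out x # q"]) (auto simp: dwalk_Cons2 dwalk_len_Cons2 vwalk_Cons2 vwalk_len_Cons2 ec_E_iff)
qed (simp add: vwalk_def)

lemma ddist_ec_lift_le_vdist:
  assumes "u \<in> V" "v \<in> V"
  shows "ddist (ec_V V) (ec_E V E) (ec_lift Lv Le) (Mid u) (Mid v) \<le> vdist V E Lv Le u v"
proof (cases "u = v")
  case True
  have "ddist (ec_V V) (ec_E V E) (ec_lift Lv Le) (Mid u) (Mid v) \<le> ereal (dwalk_len (ec_lift Lv Le) [Mid u])"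
    unfolding ddist_def using assms True by (intro INF_lower) auto
  then show ?thesis using True by (simp add: vdist_def zero_ereal_def)
next
  case False
  have "ddist (ec_V V) (ec_E V E) (ec_lift Lv Le) (Mid u) (Mid v) \<le> ereal (vwalk_len Lv Le p)"
    if p: "vwalk V E p" "hd p = u" "last p = v" for p
  proof -
    obtain b p' where pc: "p = u # b # p'"
      using p False by (cases p; cases "tl p") (auto simp: vwalk_def)
    then have w: "vwalk V E (b # p')" "{u, b} \<in> E"
      using p(1) by (auto simp: vwalk_Cons2)
    then obtain q where q: "dwalk (ec_V V) (ec_E V E) q" "hd q = In b" "last q = Mid v"
        "dwalk_len (ec_lift Lv Le) q = vwalk_len Lv Le (b # p')"
      using dwalk_of_vwalk[OF w(1)] p(3) pc by fastforce
    then obtain q' where qc: "q = In b # q'"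
      by (cases q) (auto simp: dwalk_def)
    have "ddist (ec_V V) (ec_E V E) (ec_lift Lv Le) (Mid u) (Mid v)
        \<le> ereal (dwalk_len (ec_lift Lv Le) (Mid u # Out u # q))"
      unfolding ddist_def using q qc assms w by (intro INF_lower) (auto simp: dwalk_Cons2 ec_E_iff)
    also have "\<dots> = ereal (vwalk_len Lv Le p)"
      using q qc pc by (simp add: dwalk_len_Cons2 vwalk_len_Cons2)
    finally show ?thesis .
  qed
  then show ?thesis using False unfolding vdist_def by (auto intro!: INF_greatest)
qed

fun ec_demand :: "('v \<Rightarrow> 'v \<Rightarrow> real) \<Rightarrow> 'v node \<Rightarrow> 'v node \<Rightarrow> real" where
  "ec_demand D (Mid u) (Mid v) = D u v"
| "ec_demand D _ _ = 0"

lemma ec_demand_eq_0: "a \<notin> range Mid \<or> b \<notin> range Mid \<Longrightarrow> ec_demand D a b = 0"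
  by (cases a; cases b) auto

lemma demand_on_ec_demand: "demand_on (ec_V V) (ec_demand D) \<longleftrightarrow> demand_on V D"
proof
  assume "demand_on (ec_V V) (ec_demand D)"
  then show "demand_on V D"
    unfolding demand_on_def by (metis ec_demand.simps(1) ec_V_iff(2))
next
  assume D: "demand_on V D"
  show "demand_on (ec_V V) (ec_demand D)"
    unfolding demand_on_def
  proof (intro conjI allI)
    fix a b
    show "0 \<le> ec_demand D a b" "ec_demand D a b \<noteq> 0 \<longrightarrow> a \<in> ec_V V \<and> b \<in> ec_V V"
      using D by (cases a; cases b; simp add: demand_on_def)+
  qed
qed

lemma symmetric_demand_ec_demand_symmetrize: "symmetric_demand (ec_demand (symmetrize D))"
  unfolding symmetric_demand_def
proof (intro allI)
  fix a b
  show "ec_demand (symmetrize D) a b = ec_demand (symmetrize D) b a"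
    by (cases a; cases b) (simp_all add: symmetrize_def)
qed

definition orientations :: "'v set \<Rightarrow> ('v \<times> 'v) set" where
  "orientations e = {(a, b). {a, b} = e}"

lemma orientations_doubleton: "orientations {x, y} = {(x, y), (y, x)}"
  by (auto simp: orientations_def doubleton_eq_iff)

lemma sum_orientations_doubleton:
  "x \<noteq> y \<Longrightarrow> (\<Sum>(a, b)\<in>orientations {x, y}. g a b) = g x y + g y x"
  by (simp add: orientations_doubleton)

definition vcut_vertex :: "('v node \<times> 'v node \<Rightarrow> real) \<Rightarrow> 'v \<Rightarrow> real" where
  "vcut_vertex C x = max (C (In x, Mid x)) (max (C (Mid x, Out x)) (C (In x, Out x)))"

definition vcut_edge :: "('v node \<times> 'v node \<Rightarrow> real) \<Rightarrow> 'v set \<Rightarrow> real" where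
  "vcut_edge C e = Max ((\<lambda>(a, b). C (Out a, In b)) ` orientations e)"

lemma vcut_edge_doubleton: "vcut_edge C {x, y} = max (C (Out x, In y)) (C (Out y, In x))"
  by (simp add: vcut_edge_def orientations_doubleton max.commute)

section \<open>Comparing the two graphs\<close>

locale finite_simple_graph =
  fixes V :: "'v set" and E :: "'v set set"
  assumes finite_V: "finite V"
    and edges_doubleton: "\<And>e. e \<in> E \<Longrightarrow> \<exists>a b. e = {a, b} \<and> a \<noteq> b \<and> a \<in> V \<and> b \<in> V"
begin

lemma edge_ends: "{a, b} \<in> E \<Longrightarrow> a \<in> V \<and> b \<in> V"
  using edges_doubleton by (metis doubleton_eq_iff)

lemma finite_E: "finite E"
  by (rule finite_subset[of _ "Pow V"]) (use edges_doubleton finite_V in fastforce)+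

lemma finite_ec_V: "finite (ec_V V)"
  using finite_V by (simp add: ec_V_def)

(*
  A walk starting at Out x has skipped the gadget of x, whose length the projected walk pays in
  addition. The trivial walk [Mid v] is excluded: it has length 0 but projects to [v].
*)
lemma vwalk_of_dwalk:
  assumes "\<And>x. x \<in> V \<Longrightarrow> 0 \<le> Lv x"
  shows "dwalk (ec_V V) (ec_E V E) q \<Longrightarrow> last q = Mid v \<Longrightarrow> 2 \<le> length q \<Longrightarrow>
    \<exists>p. vwalk V E p \<and> hd p = vertex_of (hd q) \<and> last p = v \<and>
      vwalk_len Lv Le p \<le> dwalk_len (ec_lift Lv Le) q + (case hd q of Out x \<Rightarrow> Lv x | _ \<Rightarrow> 0)"
proof (induction q rule: induct_list012)
  case (3 a b q)
  have e: "(a, b) \<in> ec_E V E" and wq: "dwalk (ec_V V) (ec_E V E) (b # q)"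
    using "3.prems"(1) by (auto simp: dwalk_Cons2)
  show ?case
  proof (cases "q = []")
    case True
    then have "b = Mid v" "a = In v" "v \<in> V"
      using "3.prems"(2) e by (auto simp: ec_E_iff)
    then show ?thesis
      using True by (intro exI[of _ "[v]"]) (simp add: dwalk_len_Cons2)
  next
    case False
    then obtain p where p: "vwalk V E p" "hd p = vertex_of b" "last p = v"
        "vwalk_len Lv Le p \<le> dwalk_len (ec_lift Lv Le) (b # q) + (case b of Out x \<Rightarrow> Lv x | _ \<Rightarrow> 0)"
      using "3.IH"(2) wq "3.prems"(2) by (auto simp: Suc_le_eq)
    from e consider (gadget) x where "x \<in> V"
        "(a, b) = (In x, Mid x) \<or> (a, b) = (Mid x, Out x) \<or> (a, b) = (In x, Out x)"
      | (link) x y where "a = Out x" "b = In y" "{x, y} \<in> E"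
      unfolding ec_E_iff by blast
    then show ?thesis
    proof cases
      case gadget
      then show ?thesis
        using p assms[of x] by (intro exI[of _ p]) (auto simp: dwalk_len_Cons2)
    next
      case link
      then obtain p' where "p = y # p'"
        using p(1,2) by (cases p) (auto simp: vwalk_def)
      then show ?thesis
        using p link edge_ends[OF link(3)]
        by (intro exI[of _ "x # p"]) (auto simp: vwalk_Cons2 vwalk_len_Cons2 dwalk_len_Cons2)
    qed
  qed
qed simp_all

lemma ddist_ec_lift:
  assumes "u \<in> V" "v \<in> V" "\<And>x. x \<in> V \<Longrightarrow> 0 \<le> Lv x" "\<And>e. e \<in> E \<Longrightarrow> 0 \<le> Le e"
  shows "ddist (ec_V V) (ec_E V E) (ec_lift Lv Le) (Mid u) (Mid v) = vdist V E Lv Le u v"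
proof (rule antisym[OF ddist_ec_lift_le_vdist[OF assms(1,2)]])
  show "vdist V E Lv Le u v \<le> ddist (ec_V V) (ec_E V E) (ec_lift Lv Le) (Mid u) (Mid v)"
  proof (cases "u = v")
    case True
    have "0 \<le> ec_lift Lv Le e" if "e \<in> ec_E V E" for e
      using that assms(3,4) by (cases e) (auto simp: ec_E_iff)
    then show ?thesis
      using True unfolding vdist_def ddist_def by (auto intro!: INF_greatest dwalk_len_nonneg)
  next
    case False
    have "vdist V E Lv Le u v \<le> ereal (dwalk_len (ec_lift Lv Le) q)"
      if q: "dwalk (ec_V V) (ec_E V E) q" "hd q = Mid u" "last q = Mid v" for q
    proof -
      have "2 \<le> length q"
        using q False by (cases q; cases "tl q") (auto simp: dwalk_def)
      then obtain p where "vwalk V E p" "hd p = u" "last p = v"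
          "vwalk_len Lv Le p \<le> dwalk_len (ec_lift Lv Le) q"
        using vwalk_of_dwalk[where Lv = Lv and Le = Le, OF assms(3) q(1,3)] q(2) by auto
      then show ?thesis
        unfolding vdist_def using False by (auto intro!: INF_lower2[of p])
    qed
    then show ?thesis unfolding ddist_def by (auto intro!: INF_greatest)
  qed
qed

lemma sum_ec_V_Mid:
  assumes "\<And>x. x \<notin> range Mid \<Longrightarrow> f x = 0"
  shows "sum f (ec_V V) = (\<Sum>w\<in>V. f (Mid w))"
proof -
  have "sum f (ec_V V) = sum f (Mid ` V)"
    using assms finite_ec_V by (intro sum.mono_neutral_right) (auto simp: ec_V_def)
  also have "\<dots> = (\<Sum>w\<in>V. f (Mid w))"
    by (simp add: sum.reindex inj_on_def)
  finally show ?thesis .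
qed

lemma sum_ec_demand_row: "(\<Sum>w\<in>ec_V V. ec_demand D (Mid v) w) = (\<Sum>w\<in>V. D v w)"
  by (subst sum_ec_V_Mid) (simp_all add: ec_demand_eq_0)

lemma sum_ec_demand_col: "(\<Sum>w\<in>ec_V V. ec_demand D w (Mid v)) = (\<Sum>w\<in>V. D w v)"
  by (subst sum_ec_V_Mid) (simp_all add: ec_demand_eq_0)

lemma A_respecting_ec_demand:
  "A_respecting (ec_V V) (ec_A A) (ec_demand D) \<longleftrightarrow> A_respecting V A D"
proof -
  have ball_ec_V: "(\<forall>a\<in>ec_V V. P a) \<longleftrightarrow> (\<forall>x\<in>V. P (In x) \<and> P (Mid x) \<and> P (Out x))" for P
    by (auto simp: ec_V_def)
  show ?thesis
    unfolding A_respecting_def ball_ec_V by (simp add: sum_ec_demand_row sum_ec_demand_col)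
qed

lemma ec_demand_restrict:
  assumes D: "demand_on (ec_V V) D" and A: "A_respecting (ec_V V) (ec_A A) D"
  shows "D = ec_demand (\<lambda>u v. D (Mid u) (Mid v))"
proof (intro ext)
  fix a b
  show "D a b = ec_demand (\<lambda>u v. D (Mid u) (Mid v)) a b"
  proof (cases "D a b = 0")
    case True
    then show ?thesis by (cases a; cases b) auto
  next
    case False
    have ab: "a \<in> ec_V V" "b \<in> ec_V V" and nonneg: "\<And>x y. 0 \<le> D x y"
      using D False by (auto simp: demand_on_def)
    have "D a b \<le> (\<Sum>w\<in>ec_V V. D a w)" "D a b \<le> (\<Sum>w\<in>ec_V V. D w b)"
      using ab nonneg finite_ec_V by (auto intro: member_le_sum)
    moreover have "(\<Sum>w\<in>ec_V V. D a w) \<le> ec_A A a" "(\<Sum>w\<in>ec_V V. D w b) \<le> ec_A A b"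
      using A ab unfolding A_respecting_def by fastforce+
    ultimately have "0 < ec_A A a" "0 < ec_A A b"
      using False nonneg[of a b] by linarith+
    then obtain u v where "a = Mid u" "b = Mid v"
      by (cases a; cases b) auto
    then show ?thesis by simp
  qed
qed

lemma ddist_ec_attr:
  assumes "u \<in> V" "v \<in> V"
  shows "ddist (ec_V V) (ec_E V E) (ec_attr lv le) (Mid u) (Mid v)
    = vdist V E (\<lambda>x. real (lv x)) (\<lambda>e. real (le e)) u v"
  unfolding ec_attr_eq_ec_lift using assms by (intro ddist_ec_lift) auto

lemma d_hlength_ec_demand:
  assumes D: "demand_on V D"
  shows "d_hlength (ec_V V) (ec_E V E) (ec_attr lv le) h (ec_demand D) \<longleftrightarrow> v_hlength V E lv le h D"
proof
  assume hl: "d_hlength (ec_V V) (ec_E V E) (ec_attr lv le) h (ec_demand D)"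
  show "v_hlength V E lv le h D"
    unfolding v_hlength_def
  proof (intro allI impI)
    fix u v assume "0 < D u v"
    then have "ddist (ec_V V) (ec_E V E) (ec_attr lv le) (Mid u) (Mid v) \<le> ereal h"
      using hl unfolding d_hlength_def by (metis ec_demand.simps(1))
    then show "vdist V E lv le u v \<le> ereal h"
      using ddist_ec_attr demand_on_pos_mem[OF D \<open>0 < D u v\<close>] by simp
  qed
next
  assume hl: "v_hlength V E lv le h D"
  show "d_hlength (ec_V V) (ec_E V E) (ec_attr lv le) h (ec_demand D)"
    unfolding d_hlength_def
  proof (intro allI impI)
    fix a b assume "0 < ec_demand D a b"
    then obtain u v where "a = Mid u" "b = Mid v" "0 < D u v"
      by (cases a; cases b) auto
    then show "ddist (ec_V V) (ec_E V E) (ec_attr lv le) a b \<le> ereal h"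
      using hl ddist_ec_attr demand_on_pos_mem[OF D] unfolding v_hlength_def by simp
  qed
qed

lemma d_sep_ec_demand:
  "d_sep (ec_V V) (ec_E V E) L H C hp (ec_demand D) =
    (\<Sum>(u, v)\<in>{(u, v)\<in>V \<times> V.
        ereal hp < ddist (ec_V V) (ec_E V E) (\<lambda>e. L e + H * C e) (Mid u) (Mid v)}. D u v)"
  (is "_ = (\<Sum>(u, v)\<in>?T. D u v)")
proof -
  let ?S = "{(a, b)\<in>ec_V V \<times> ec_V V. ereal hp < ddist (ec_V V) (ec_E V E) (\<lambda>e. L e + H * C e) a b}"
  have "d_sep (ec_V V) (ec_E V E) L H C hp (ec_demand D)
      = (\<Sum>(a, b)\<in>(\<lambda>(u, v). (Mid u, Mid v)) ` ?T. ec_demand D a b)"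
    unfolding d_sep_def
  proof (rule sum.mono_neutral_right)
    show "finite ?S"
      by (rule finite_subset[of _ "ec_V V \<times> ec_V V"]) (auto simp: finite_ec_V)
  qed (auto intro!: ec_demand_eq_0)
  also have "\<dots> = (\<Sum>(u, v)\<in>?T. D u v)"
    by (subst sum.reindex) (auto simp: inj_on_def case_prod_beta)
  finally show ?thesis .
qed

lemma sum_ec_E:
  "sum f (ec_E V E) = (\<Sum>v\<in>V. f (In v, Mid v) + f (Mid v, Out v) + f (In v, Out v))
     + (\<Sum>e\<in>E. \<Sum>(a, b)\<in>orientations e. f (Out a, In b))"
proof -
  let ?G = "\<lambda>v. {(In v, Mid v), (Mid v, Out v), (In v, Out v)}"
  let ?L = "\<lambda>e. (\<lambda>(a, b). (Out a, In b)) ` orientations e"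
  have fin_L: "finite (?L e)" if "e \<in> E" for e
    using edges_doubleton[OF that] by (auto simp: orientations_doubleton)
  have "ec_E V E = (\<Union>v\<in>V. ?G v) \<union> (\<Union>e\<in>E. ?L e)"
    by (auto simp: ec_E_def orientations_def)
  then have "sum f (ec_E V E) = sum f (\<Union>v\<in>V. ?G v) + sum f (\<Union>e\<in>E. ?L e)"
    using finite_V finite_E fin_L by (simp only:) (rule sum.union_disjoint; auto)
  also have "sum f (\<Union>v\<in>V. ?G v) = (\<Sum>v\<in>V. sum f (?G v))"
    using finite_V by (intro sum.UNION_disjoint) auto
  also have "sum f (\<Union>e\<in>E. ?L e) = (\<Sum>e\<in>E. sum f (?L e))"
    using finite_E fin_L by (intro sum.UNION_disjoint) (auto simp: orientations_def)
  also have "(\<Sum>e\<in>E. sum f (?L e)) = (\<Sum>e\<in>E. \<Sum>(a, b)\<in>orientations e. f (Out a, In b))"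
    by (intro sum.cong refl, subst sum.reindex) (auto simp: inj_on_def case_prod_beta)
  finally show ?thesis by (simp add: add.assoc)
qed

lemma d_movcut_ec_lift: "v_movcut V E H Cv Ce \<Longrightarrow> d_movcut (ec_E V E) H (ec_lift Cv Ce)"
  unfolding d_movcut_def v_movcut_def by (auto simp: ec_E_iff)

lemma d_cutsize_ec_lift:
  "d_cutsize (ec_E V E) (ec_attr uv ue) (ec_lift Cv Ce)
     = 3 * (\<Sum>v\<in>V. real (uv v) * Cv v) + 2 * (\<Sum>e\<in>E. real (ue e) * Ce e)"
proof -
  have "(\<Sum>(a, b)\<in>orientations e. ec_attr uv ue (Out a, In b) * ec_lift Cv Ce (Out a, In b))
      = 2 * (real (ue e) * Ce e)" if "e \<in> E" for e
    using edges_doubleton[OF that] by (auto simp: sum_orientations_doubleton insert_commute)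
  then show ?thesis
    unfolding d_cutsize_def sum_ec_E by (simp add: sum_distrib_left ac_simps)
qed

lemma d_sep_ec_lift:
  assumes "v_movcut V E H Cv Ce"
  shows "d_sep (ec_V V) (ec_E V E) (ec_attr lv le) H (ec_lift Cv Ce) hp (ec_demand D)
    = v_sep V E lv le H Cv Ce hp D"
proof -
  let ?Lv = "\<lambda>x. real (lv x) + H * Cv x" and ?Le = "\<lambda>e. real (le e) + H * Ce e"
  have "(\<lambda>e. ec_attr lv le e + H * ec_lift Cv Ce e) = ec_lift ?Lv ?Le"
  proof (rule ext, clarify)
    fix a b :: "'v node"
    show "ec_attr lv le (a, b) + H * ec_lift Cv Ce (a, b) = ec_lift ?Lv ?Le (a, b)"
      by (cases a; cases b) simp_all
  qed
  moreover have "ddist (ec_V V) (ec_E V E) (ec_lift ?Lv ?Le) (Mid u) (Mid v) = vdist V E ?Lv ?Le u v"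
    if "u \<in> V" "v \<in> V" for u v
    using that assms by (intro ddist_ec_lift) (auto simp: v_movcut_def intro!: add_nonneg_nonneg cut_val_mult_nonneg)
  ultimately show ?thesis
    unfolding d_sep_ec_demand v_sep_def by (intro sum.cong) auto
qed

lemma v_movcut_vcut:
  assumes "d_movcut (ec_E V E) H C"
  shows "v_movcut V E H (vcut_vertex C) (vcut_edge C)"
proof -
  have "cut_val H (vcut_edge C e)" if "e \<in> E" for e
  proof -
    obtain x y where "e = {x, y}"
      using edges_doubleton[OF \<open>e \<in> E\<close>] by blast
    with that assms show ?thesis
      unfolding d_movcut_def by (auto simp: vcut_edge_doubleton ec_E_iff insert_commute intro!: cut_val_max)
  qed
  with assms show ?thesis
    unfolding d_movcut_def v_movcut_def by (auto simp: vcut_vertex_def ec_E_iff intro!: cut_val_max)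
qed

lemma v_cutsize_vcut_le:
  assumes "d_movcut (ec_E V E) H C"
  shows "v_cutsize V E uv ue (vcut_vertex C) (vcut_edge C) \<le> d_cutsize (ec_E V E) (ec_attr uv ue) C"
proof -
  have C: "0 \<le> C (a, b)" if "(a, b) \<in> ec_E V E" for a b
    using assms that unfolding d_movcut_def by (auto intro: cut_val_nonneg)
  have "real (uv v) * vcut_vertex C v \<le> ec_attr uv ue (In v, Mid v) * C (In v, Mid v)
      + ec_attr uv ue (Mid v, Out v) * C (Mid v, Out v) + ec_attr uv ue (In v, Out v) * C (In v, Out v)"
    if "v \<in> V" for v
  proof -
    have "vcut_vertex C v \<le> C (In v, Mid v) + C (Mid v, Out v) + C (In v, Out v)"
      using C[of "In v" "Mid v"] C[of "Mid v" "Out v"] C[of "In v" "Out v"] that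
      by (simp add: vcut_vertex_def ec_E_iff)
    then show ?thesis
      by (simp add: mult_left_mono flip: distrib_left)
  qed
  moreover have "real (ue e) * vcut_edge C e
      \<le> (\<Sum>(a, b)\<in>orientations e. ec_attr uv ue (Out a, In b) * C (Out a, In b))" if "e \<in> E" for e
    using edges_doubleton[OF that] C that
    by (auto simp: vcut_edge_doubleton sum_orientations_doubleton insert_commute ec_E_iff
        simp flip: distrib_left intro!: mult_left_mono)
  ultimately show ?thesis
    unfolding v_cutsize_def d_cutsize_def sum_ec_E by (intro add_mono sum_mono) auto
qed

lemma ddist_le_vdist_vcut:
  assumes C: "d_movcut (ec_E V E) H C" and "u \<in> V" "v \<in> V"
  shows "ddist (ec_V V) (ec_E V E) (\<lambda>e. ec_attr lv le e + H * C e) (Mid u) (Mid v)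
    \<le> vdist V E (\<lambda>x. real (lv x) + H * vcut_vertex C x) (\<lambda>e. real (le e) + H * vcut_edge C e) u v"
proof -
  let ?Lv = "\<lambda>x. real (lv x) + H * vcut_vertex C x" and ?Le = "\<lambda>e. real (le e) + H * vcut_edge C e"
  have cv: "\<And>e. e \<in> ec_E V E \<Longrightarrow> cut_val H (C e)"
    and cv': "\<And>x. x \<in> V \<Longrightarrow> cut_val H (vcut_vertex C x)" "\<And>e. e \<in> E \<Longrightarrow> cut_val H (vcut_edge C e)"
    using C v_movcut_vcut[OF C] by (auto simp: d_movcut_def v_movcut_def)
  have "ec_attr lv le (a, b) + H * C (a, b) \<le> ec_lift ?Lv ?Le (a, b)" if "(a, b) \<in> ec_E V E" for a b
    using that cv[OF that] cv'
    by (auto simp: ec_E_iff intro!: cut_val_mult_mono) (auto simp: vcut_vertex_def vcut_edge_doubleton)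
  then have "ddist (ec_V V) (ec_E V E) (\<lambda>e. ec_attr lv le e + H * C e) (Mid u) (Mid v)
      \<le> ddist (ec_V V) (ec_E V E) (ec_lift ?Lv ?Le) (Mid u) (Mid v)"
    by (intro ddist_mono) auto
  also have "\<dots> \<le> vdist V E ?Lv ?Le u v"
    using assms(2,3) by (rule ddist_ec_lift_le_vdist)
  finally show ?thesis .
qed

lemma d_sep_le_v_sep_vcut:
  assumes C: "d_movcut (ec_E V E) H C" and D: "demand_on V D"
  shows "d_sep (ec_V V) (ec_E V E) (ec_attr lv le) H C hp (ec_demand D)
    \<le> v_sep V E lv le H (vcut_vertex C) (vcut_edge C) hp D"
  unfolding d_sep_ec_demand v_sep_def
proof (rule sum_mono2)
  show "finite {(u, v)\<in>V \<times> V. ereal hp < vdist V E (\<lambda>x. real (lv x) + H * vcut_vertex C x)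
      (\<lambda>e. real (le e) + H * vcut_edge C e) u v}"
    using finite_V by (auto intro: finite_subset[of _ "V \<times> V"])
qed (use ddist_le_vdist_vcut[OF C] D in \<open>auto simp: demand_on_def intro: less_le_trans\<close>)

lemma d_expanding_if_v_expanding:
  assumes "v_expanding V E lv le uv ue A h s \<phi>"
  shows "d_expanding (ec_V V) (ec_E V E) (ec_attr lv le) (ec_attr uv ue) (ec_A A) h s \<phi>"
  unfolding d_expanding_def d_spars_hs_def le_INF_iff
proof (intro allI impI ballI)
  fix C D
  assume C: "d_movcut (ec_E V E) (h * s) C" and "D \<in> {D. demand_on (ec_V V) D \<and>
    A_respecting (ec_V V) (ec_A A) D \<and> d_hlength (ec_V V) (ec_E V E) (ec_attr lv le) h D \<and> symmetric_demand D}"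
  then have D: "demand_on (ec_V V) D" "A_respecting (ec_V V) (ec_A A) D"
      "d_hlength (ec_V V) (ec_E V E) (ec_attr lv le) h D"
    by auto
  define Dv where "Dv u v = D (Mid u) (Mid v)" for u v
  have D_eq: "D = ec_demand Dv"
    unfolding Dv_def using D(1,2) by (rule ec_demand_restrict)
  have Dv: "demand_on V Dv" "A_respecting V A Dv" "v_hlength V E lv le h Dv"
    using D unfolding D_eq by (simp_all add: demand_on_ec_demand A_respecting_ec_demand d_hlength_ec_demand)
  let ?Cv = "vcut_vertex C" and ?Ce = "vcut_edge C"
  have "ereal \<phi> \<le> spars_of (v_cutsize V E uv ue ?Cv ?Ce) (v_sep V E lv le (h * s) ?Cv ?Ce (h * s) Dv)"
    using assms v_movcut_vcut[OF C] Dv unfolding v_expanding_def v_spars_hs_def le_INF_iff by blast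
  then show "ereal \<phi> \<le> spars_of (d_cutsize (ec_E V E) (ec_attr uv ue) C)
      (d_sep (ec_V V) (ec_E V E) (ec_attr lv le) (h * s) C (h * s) D)"
    unfolding D_eq
    by (rule spars_of_mono[OF v_cutsize_nonneg[OF v_movcut_vcut[OF C]] v_cutsize_vcut_le[OF C]
        d_sep_nonneg[OF D(1)[unfolded D_eq]] d_sep_le_v_sep_vcut[OF C Dv(1)]])
qed

lemma v_expanding_if_d_expanding:
  assumes "d_expanding (ec_V V) (ec_E V E) (ec_attr lv le) (ec_attr uv ue) (ec_A A) h s \<phi>"
  shows "v_expanding V E lv le uv ue A h s (\<phi> / 3)"
  unfolding v_expanding_def v_spars_hs_def le_INF_iff
proof (intro allI impI ballI)
  fix Cv Ce D
  assume C: "v_movcut V E (h * s) Cv Ce"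
    and "D \<in> {D. demand_on V D \<and> A_respecting V A D \<and> v_hlength V E lv le h D}"
  then have D: "demand_on V D" "A_respecting V A D" "v_hlength V E lv le h D"
    by auto
  let ?Dd = "ec_demand (symmetrize D)"
  have "demand_on (ec_V V) ?Dd" "A_respecting (ec_V V) (ec_A A) ?Dd"
      "d_hlength (ec_V V) (ec_E V E) (ec_attr lv le) h ?Dd" "symmetric_demand ?Dd"
    using D by (simp_all add: demand_on_ec_demand A_respecting_ec_demand d_hlength_ec_demand
        demand_on_symmetrize A_respecting_symmetrize v_hlength_symmetrize symmetric_demand_ec_demand_symmetrize)
  then have "ereal \<phi> \<le> spars_of (d_cutsize (ec_E V E) (ec_attr uv ue) (ec_lift Cv Ce))
      (d_sep (ec_V V) (ec_E V E) (ec_attr lv le) (h * s) (ec_lift Cv Ce) (h * s) ?Dd)"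
    using assms d_movcut_ec_lift[OF C] unfolding d_expanding_def d_spars_hs_def le_INF_iff by blast
  then have spars: "ereal \<phi> \<le> spars_of (3 * (\<Sum>v\<in>V. real (uv v) * Cv v) + 2 * (\<Sum>e\<in>E. real (ue e) * Ce e))
      (v_sep V E lv le (h * s) Cv Ce (h * s) D)"
    by (simp add: d_cutsize_ec_lift d_sep_ec_lift[OF C] v_sep_symmetrize)
  have "0 \<le> (\<Sum>e\<in>E. real (ue e) * Ce e)"
    by (intro sum_nonneg) (auto dest: v_movcut_nonneg[OF C])
  then show "ereal (\<phi> / 3) \<le> spars_of (v_cutsize V E uv ue Cv Ce) (v_sep V E lv le (h * s) Cv Ce (h * s) D)"
    by (intro spars_of_scale[OF _ _ v_sep_nonneg[OF D(1)] spars]) (auto simp: v_cutsize_def)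
qed

end

lemma finite_simple_graph_if_vc_graph: "vc_graph V E lv le uv ue A \<Longrightarrow> finite_simple_graph V E"
  unfolding vc_graph_def by unfold_locales auto

theorem theorem4p5:
  fixes V :: "'v set" and E :: "'v set set"
    and lv :: "'v \<Rightarrow> nat" and le :: "'v set \<Rightarrow> nat"
    and uv :: "'v \<Rightarrow> nat" and ue :: "'v set \<Rightarrow> nat"
    and A :: "'v \<Rightarrow> real" and h s \<phi> :: real
  assumes "vc_graph V E lv le uv ue A"
  shows "(v_expanding V E lv le uv ue A h s \<phi> \<longrightarrow>
            d_expanding (ec_V V) (ec_E V E) (ec_attr lv le) (ec_attr uv ue) (ec_A A) h s \<phi>)
       \<and> (d_expanding (ec_V V) (ec_E V E) (ec_attr lv le) (ec_attr uv ue) (ec_A A) h s \<phi> \<longrightarrow>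
            v_expanding V E lv le uv ue A h s (\<phi> / 3))"
proof -
  interpret finite_simple_graph V E
    using assms by (rule finite_simple_graph_if_vc_graph)
  show ?thesis
    using d_expanding_if_v_expanding v_expanding_if_d_expanding by blast
qed

end
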